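(* In the bipartite case, a CPTP map $\mathcal M:\mathbf L(\mathcal H_X\otimes\mathcal H_Y)\to\mathbf L(\mathcal H_A\otimes\mathcal H_B)$ belongs to LOCQP if and only if it is a probabilistic mixture $\mathcal M=q\mathcal M_1+(1-q)\mathcal M_2$, $q\in[0,1]$, of a one-way LOCC map $\mathcal M_1$ from Alice to Bob and a one-way LOCC map $\mathcal M_2$ from Bob to Alice.
   Context: A quantum instrument with classical input $i$ is a family $\{\mathcal A_{o|i}\}_o$ of completely positive maps whose sum over $o$ is trace preserving. LOCQP is the set of maps $\sum_{i_A,i_B,o_A,o_B}p(i_A,i_B|o_A,o_B)\,\mathcal A_{o_A|i_A}\otimes\mathcal B_{o_B|i_B}$ with instruments $\{\mathcal A_{o_A|i_A}\}_{o_A}$ ($\mathbf L(\mathcal H_X)\to\mathbf L(\mathcal H_A)$), $\{\mathcal B_{o_B|i_B}\}_{o_B}$ ($\mathbf L(\mathcal H_Y)\to\mathbf L(\mathcal H_B)$), where $p$ is a conditional probability distribution over finite sets satisfying $\sum_{i_A,i_B,o_A,o_B}p(i_A,i_B|o_A,o_B)p_A(o_A|i_A)p_B(o_B|i_B)=1$ for all conditional probability distributions $p_A(o_A|i_A)$, $p_B(o_B|i_B)$ (equivalently, the displayed sum is CPTP for all choices of instruments). One-way LOCC from Alice to Bob is the set of maps $\sum_m\mathcal A_m\otimes\mathcal B_{|m}$ with $\{\mathcal A_m\}_m$ an instrument of Alice and each $\mathcal B_{|m}$ a CPTP map of Bob; symmetrically from Bob to Alice. *)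

theory Defs
  imports Complex_Main
begin

text \<open>Finite-dimensional Hilbert spaces are modelled as C^I for a finite index type I;
 operators on C^I are complex matrices indexed by I (functions I => I => complex).
 The composite system H_X (x) H_Y has index type 'x * 'y.\<close>

type_synonym 'i op = "'i \<Rightarrow> 'i \<Rightarrow> complex"
type_synonym ('i, 'j) qmap = "'i op \<Rightarrow> 'j op"

definition op_trace :: "('i::finite) op \<Rightarrow> complex" where
  "op_trace M = (\<Sum>i\<in>UNIV. M i i)"

definition unit_op :: "'i \<Rightarrow> 'i \<Rightarrow> 'i op" where
  "unit_op x x' = (\<lambda>i j. if i = x \<and> j = x' then 1 else 0)"

definition psd :: "('i::finite) op \<Rightarrow> bool" where
  "psd M \<longleftrightarrow> (\<forall>v :: 'i \<Rightarrow> complex.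
      Im (\<Sum>i\<in>UNIV. \<Sum>j\<in>UNIV. cnj (v i) * M i j * v j) = 0 \<and>
      Re (\<Sum>i\<in>UNIV. \<Sum>j\<in>UNIV. cnj (v i) * M i j * v j) \<ge> 0)"

definition lin_map :: "('i, 'j) qmap \<Rightarrow> bool" where
  "lin_map \<Phi> \<longleftrightarrow> (\<forall>(c::complex) M N.
      \<Phi> (\<lambda>i j. c * M i j + N i j) = (\<lambda>k l. c * \<Phi> M k l + \<Phi> N k l))"

definition choi :: "('x, 'a) qmap \<Rightarrow> ('x \<times> 'a) op" where
  "choi \<Phi> = (\<lambda>(x, a) (x', a'). \<Phi> (unit_op x x') a a')"

text \<open>Completely positive (Choi's criterion: the Choi matrix is PSD).\<close>
definition CP :: "('x::finite, 'a::finite) qmap \<Rightarrow> bool" where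
  "CP \<Phi> \<longleftrightarrow> lin_map \<Phi> \<and> psd (choi \<Phi>)"

definition TP :: "('x::finite, 'a::finite) qmap \<Rightarrow> bool" where
  "TP \<Phi> \<longleftrightarrow> (\<forall>M. op_trace (\<Phi> M) = op_trace M)"

definition CPTP :: "('x::finite, 'a::finite) qmap \<Rightarrow> bool" where
  "CPTP \<Phi> \<longleftrightarrow> CP \<Phi> \<and> TP \<Phi>"

definition sum_maps :: "'l set \<Rightarrow> ('l \<Rightarrow> ('i, 'j) qmap) \<Rightarrow> ('i, 'j) qmap" where
  "sum_maps L F = (\<lambda>M k l. \<Sum>m\<in>L. F m M k l)"

definition instrument :: "'l set \<Rightarrow> ('l \<Rightarrow> ('x::finite, 'a::finite) qmap) \<Rightarrow> bool" where
  "instrument Outs F \<longleftrightarrow> finite Outs \<and> (\<forall>m\<in>Outs. CP (F m)) \<and> TP (sum_maps Outs F)"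

text \<open>Tensor product of two linear maps, defined on the product basis of matrix units.\<close>
definition tensor_map :: "('x::finite, 'a) qmap \<Rightarrow> ('y::finite, 'b) qmap \<Rightarrow> ('x \<times> 'y, 'a \<times> 'b) qmap" where
  "tensor_map \<Phi> \<Psi> = (\<lambda>\<rho> (a, b) (a', b').
      \<Sum>x\<in>UNIV. \<Sum>x'\<in>UNIV. \<Sum>y\<in>UNIV. \<Sum>y'\<in>UNIV.
        \<rho> (x, y) (x', y') * \<Phi> (unit_op x x') a a' * \<Psi> (unit_op y y') b b')"

definition cond_prob :: "'i set \<Rightarrow> 'o set \<Rightarrow> ('o \<Rightarrow> 'i \<Rightarrow> real) \<Rightarrow> bool" where
  "cond_prob I Outs p \<longleftrightarrow> (\<forall>i\<in>I. (\<forall>r\<in>Outs. p r i \<ge> 0) \<and> (\<Sum>r\<in>Outs. p r i) = 1)"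

text \<open>A o i is the element of Alice's instrument with classical input i and outcome o;
  p iA iB oA oB stands for p(iA,iB|oA,oB).\<close>
definition LOCQP :: "('x::finite \<times> 'y::finite, 'a::finite \<times> 'b::finite) qmap set" where
  "LOCQP = {\<M>. \<exists>(IA::nat set) (IB::nat set) (OA::nat set) (OB::nat set)
       (p :: nat \<Rightarrow> nat \<Rightarrow> nat \<Rightarrow> nat \<Rightarrow> real)
       (A :: nat \<Rightarrow> nat \<Rightarrow> ('x, 'a) qmap) (B :: nat \<Rightarrow> nat \<Rightarrow> ('y, 'b) qmap).
     finite IA \<and> finite IB \<and> finite OA \<and> finite OB \<and>
     (\<forall>iA\<in>IA. instrument OA (\<lambda>oA. A oA iA)) \<and>
     (\<forall>iB\<in>IB. instrument OB (\<lambda>oB. B oB iB)) \<and>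
     cond_prob (OA \<times> OB) (IA \<times> IB) (\<lambda>(iA, iB) (oA, oB). p iA iB oA oB) \<and>
     (\<forall>pA pB. cond_prob IA OA pA \<longrightarrow> cond_prob IB OB pB \<longrightarrow>
        (\<Sum>iA\<in>IA. \<Sum>iB\<in>IB. \<Sum>oA\<in>OA. \<Sum>oB\<in>OB.
            p iA iB oA oB * pA oA iA * pB oB iB) = 1) \<and>
     \<M> = (\<lambda>\<rho> k l. \<Sum>iA\<in>IA. \<Sum>iB\<in>IB. \<Sum>oA\<in>OA. \<Sum>oB\<in>OB.
            complex_of_real (p iA iB oA oB) * tensor_map (A oA iA) (B oB iB) \<rho> k l)}"

definition LOCC_AB :: "('x::finite \<times> 'y::finite, 'a::finite \<times> 'b::finite) qmap set" where
  "LOCC_AB = {\<M>. \<exists>(L::nat set) (A :: nat \<Rightarrow> ('x, 'a) qmap) (B :: nat \<Rightarrow> ('y, 'b) qmap).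
     instrument L A \<and> (\<forall>m\<in>L. CPTP (B m)) \<and>
     \<M> = sum_maps L (\<lambda>m. tensor_map (A m) (B m))}"

definition LOCC_BA :: "('x::finite \<times> 'y::finite, 'a::finite \<times> 'b::finite) qmap set" where
  "LOCC_BA = {\<M>. \<exists>(L::nat set) (A :: nat \<Rightarrow> ('x, 'a) qmap) (B :: nat \<Rightarrow> ('y, 'b) qmap).
     instrument L B \<and> (\<forall>m\<in>L. CPTP (A m)) \<and>
     \<M> = sum_maps L (\<lambda>m. tensor_map (A m) (B m))}"

end

theory Submission
  imports Defs "HOL-Library.Countable"
begin

text \<open>Only the normalisation of the classical process p matters. Normalisation on deterministic
  local strategies forces p(iA,iB|oA,oB) to be additively separable, p = R1(iA,iB,oA) + R2(iA,iB,oB),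
  with nonnegative parts whose marginals \<Sum>iB R1 and \<Sum>iA R2 do not depend on the outcome.
  Alice's instruments weighted by R1 (with Bob ignoring his outcome) form a one-way LOCC map from
  Alice to Bob, symmetrically for R2, and the total masses of R1 and R2 give the mixing weights q
  and 1 - q. Conversely, a mixture is realised by a process in which the input 0 tells a party to
  act first and the other party's input carries the first party's outcome.\<close>

definition scale_map :: "real \<Rightarrow> ('i, 'j) qmap \<Rightarrow> ('i, 'j) qmap" where
  "scale_map c \<Phi> = (\<lambda>\<rho> k l. complex_of_real c * \<Phi> \<rho> k l)"

lemma sum_maps_apply: "sum_maps S F \<rho> k l = (\<Sum>s\<in>S. F s \<rho> k l)"
  by (simp add: sum_maps_def)

lemma sum_maps_scale_map:
  "sum_maps S (\<lambda>s. scale_map (c s) \<Phi>) = scale_map (\<Sum>s\<in>S. c s) \<Phi>"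
  by (simp add: sum_maps_def scale_map_def sum_distrib_right fun_eq_iff)

lemma sum_maps_relabel:
  "sum_maps (to_nat ` S) (\<lambda>m. F (from_nat m)) = sum_maps (S :: 'l::countable set) F"
  unfolding sum_maps_def
  by (subst sum.reindex) (auto intro: inj_on_subset[OF inj_to_nat])

definition quadratic_form :: "('i::finite) op \<Rightarrow> ('i \<Rightarrow> complex) \<Rightarrow> complex" where
  "quadratic_form C v = (\<Sum>i\<in>UNIV. \<Sum>j\<in>UNIV. cnj (v i) * C i j * v j)"

lemma psd_iff_quadratic_form:
  "psd C \<longleftrightarrow> (\<forall>v. Im (quadratic_form C v) = 0 \<and> Re (quadratic_form C v) \<ge> 0)"
  by (simp add: psd_def quadratic_form_def)

lemma quadratic_form_scale:
  "quadratic_form (\<lambda>i j. complex_of_real c * C i j) v = complex_of_real c * quadratic_form C v"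
  unfolding quadratic_form_def by (simp add: sum_distrib_left mult_ac)

lemma quadratic_form_sum:
  "quadratic_form (\<lambda>i j. \<Sum>s\<in>S. C s i j) v = (\<Sum>s\<in>S. quadratic_form (C s) v)"
  unfolding quadratic_form_def
  by (simp add: sum_distrib_left sum_distrib_right mult_ac sum.swap[of _ S])

lemma psd_scale: "psd C \<Longrightarrow> c \<ge> 0 \<Longrightarrow> psd (\<lambda>i j. complex_of_real c * C i j)"
  unfolding psd_iff_quadratic_form quadratic_form_scale by simp

lemma psd_sum: "(\<And>s. s \<in> S \<Longrightarrow> psd (C s)) \<Longrightarrow> psd (\<lambda>i j. \<Sum>s\<in>S. C s i j)"
  unfolding psd_iff_quadratic_form quadratic_form_sum
  by (auto simp: Im_sum Re_sum intro: sum_nonneg)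

lemma CP_scale_map:
  assumes "CP \<Phi>" "c \<ge> 0"
  shows "CP (scale_map c \<Phi>)"
proof -
  have "lin_map (scale_map c \<Phi>)"
    using assms(1) by (auto simp: CP_def lin_map_def scale_map_def algebra_simps fun_eq_iff)
  moreover have "choi (scale_map c \<Phi>) = (\<lambda>i j. complex_of_real c * choi \<Phi> i j)"
    by (auto simp: choi_def scale_map_def fun_eq_iff)
  ultimately show ?thesis
    using assms by (simp add: CP_def psd_scale)
qed

lemma CP_sum_maps:
  assumes "\<And>s. s \<in> S \<Longrightarrow> CP (F s)"
  shows "CP (sum_maps S F)"
proof -
  have "lin_map (sum_maps S F)"
  proof (unfold lin_map_def, intro allI ext)
    fix c :: complex and M N and k l
    have "(\<Sum>s\<in>S. F s (\<lambda>i j. c * M i j + N i j) k l) = (\<Sum>s\<in>S. c * F s M k l + F s N k l)"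
      using assms by (intro sum.cong) (auto simp: CP_def lin_map_def)
    then show "sum_maps S F (\<lambda>i j. c * M i j + N i j) k l = c * sum_maps S F M k l + sum_maps S F N k l"
      by (simp add: sum_maps_def sum.distrib sum_distrib_left)
  qed
  moreover have "choi (sum_maps S F) = (\<lambda>i j. \<Sum>s\<in>S. choi (F s) i j)"
    by (auto simp: choi_def sum_maps_def fun_eq_iff)
  ultimately show ?thesis
    using assms by (simp add: CP_def psd_sum)
qed

lemma op_trace_sum_maps: "op_trace (sum_maps S F \<rho>) = (\<Sum>s\<in>S. op_trace (F s \<rho>))"
  unfolding op_trace_def sum_maps_def by (rule sum.swap)

lemma op_trace_scale_map: "op_trace (scale_map c \<Phi> \<rho>) = complex_of_real c * op_trace (\<Phi> \<rho>)"
  unfolding op_trace_def scale_map_def by (simp add: sum_distrib_left)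

lemma TP_sum_maps_iff: "TP (sum_maps S F) \<longleftrightarrow> (\<forall>\<rho>. (\<Sum>s\<in>S. op_trace (F s \<rho>)) = op_trace \<rho>)"
  by (simp add: TP_def op_trace_sum_maps)

lemma instrument_outcomes_nonempty:
  fixes F :: "'l \<Rightarrow> ('x::finite, 'a::finite) qmap"
  assumes "instrument Outs F"
  shows "Outs \<noteq> {}"
proof
  fix x :: 'x
  assume "Outs = {}"
  have "op_trace (unit_op x x) = 1"
    by (simp add: op_trace_def unit_op_def)
  then show False
    using assms \<open>Outs = {}\<close> by (auto simp: instrument_def TP_sum_maps_iff dest: spec[of _ "unit_op x x"])
qed

lemma CPTP_sum_maps_instrument: "instrument Outs F \<Longrightarrow> CPTP (sum_maps Outs F)"
  unfolding instrument_def CPTP_def by (auto intro: CP_sum_maps)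

lemma instrument_relabel:
  "instrument (S :: 'l::countable set) F \<Longrightarrow> instrument (to_nat ` S) (\<lambda>m. F (from_nat m))"
  unfolding instrument_def by (auto simp: sum_maps_relabel)

lemma sum_maps_deterministic_outcome:
  "finite Outs \<Longrightarrow> u \<in> Outs \<Longrightarrow> sum_maps Outs (\<lambda>v. scale_map (if v = u then 1 else 0) \<Phi>) = \<Phi>"
  unfolding sum_maps_scale_map by (simp add: scale_map_def)

lemma instrument_deterministic_outcome:
  assumes "CPTP \<Phi>" "finite Outs" "u \<in> Outs"
  shows "instrument Outs (\<lambda>v. scale_map (if v = u then 1 else 0) \<Phi>)"
  using assms unfolding instrument_def CPTP_def
  by (auto simp: sum_maps_deterministic_outcome intro!: CP_scale_map)

lemma tensor_map_scale_left:
  "tensor_map (scale_map c \<Phi>) \<Psi> \<rho> k l = complex_of_real c * tensor_map \<Phi> \<Psi> \<rho> k l"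
  by (cases k; cases l) (simp add: tensor_map_def scale_map_def sum_distrib_left mult_ac)

lemma tensor_map_scale_right:
  "tensor_map \<Phi> (scale_map c \<Psi>) \<rho> k l = complex_of_real c * tensor_map \<Phi> \<Psi> \<rho> k l"
  by (cases k; cases l) (simp add: tensor_map_def scale_map_def sum_distrib_left mult_ac)

lemma tensor_map_sum_maps_left:
  "tensor_map (sum_maps S F) \<Psi> \<rho> k l = (\<Sum>s\<in>S. tensor_map (F s) \<Psi> \<rho> k l)"
  by (cases k; cases l)
    (simp add: tensor_map_def sum_maps_def sum_distrib_left sum_distrib_right sum.swap[of _ S])

lemma tensor_map_sum_maps_right:
  "tensor_map \<Phi> (sum_maps S F) \<rho> k l = (\<Sum>s\<in>S. tensor_map \<Phi> (F s) \<rho> k l)"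
  by (cases k; cases l)
    (simp add: tensor_map_def sum_maps_def sum_distrib_left sum_distrib_right sum.swap[of _ S])

lemma LOCC_AB_intro:
  fixes S :: "'l::countable set"
  assumes "instrument S A" "\<And>s. s \<in> S \<Longrightarrow> CPTP (B s)"
  shows "sum_maps S (\<lambda>s. tensor_map (A s) (B s)) \<in> LOCC_AB"
  unfolding LOCC_AB_def mem_Collect_eq
proof (intro exI conjI)
  show "instrument (to_nat ` S) (\<lambda>m. A (from_nat m))"
    using assms(1) by (rule instrument_relabel)
  show "\<forall>m\<in>to_nat ` S. CPTP (B (from_nat m))"
    using assms(2) by auto
  show "sum_maps S (\<lambda>s. tensor_map (A s) (B s)) =
      sum_maps (to_nat ` S) (\<lambda>m. tensor_map (A (from_nat m)) (B (from_nat m)))"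
    by (rule sum_maps_relabel[symmetric])
qed

lemma LOCC_BA_intro:
  fixes S :: "'l::countable set"
  assumes "instrument S B" "\<And>s. s \<in> S \<Longrightarrow> CPTP (A s)"
  shows "sum_maps S (\<lambda>s. tensor_map (A s) (B s)) \<in> LOCC_BA"
  unfolding LOCC_BA_def mem_Collect_eq
proof (intro exI conjI)
  show "instrument (to_nat ` S) (\<lambda>m. B (from_nat m))"
    using assms(1) by (rule instrument_relabel)
  show "\<forall>m\<in>to_nat ` S. CPTP (A (from_nat m))"
    using assms(2) by auto
  show "sum_maps S (\<lambda>s. tensor_map (A s) (B s)) =
      sum_maps (to_nat ` S) (\<lambda>m. tensor_map (A (from_nat m)) (B (from_nat m)))"
    by (rule sum_maps_relabel[symmetric])
qed

lemma weighted_instrument: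
  fixes A :: "'o \<Rightarrow> 'i \<Rightarrow> ('x::finite, 'a::finite) qmap"
  assumes fin: "finite I" "finite Outs" "finite J"
    and inst: "\<And>i. i \<in> I \<Longrightarrow> instrument Outs (\<lambda>u. A u i)"
    and w_nonneg: "\<And>i j u. i \<in> I \<Longrightarrow> j \<in> J \<Longrightarrow> u \<in> Outs \<Longrightarrow> w i j u \<ge> 0"
    and w_marginal: "\<And>i u. i \<in> I \<Longrightarrow> u \<in> Outs \<Longrightarrow> (\<Sum>j\<in>J. w i j u) = r i"
    and r_sum: "(\<Sum>i\<in>I. r i) = 1"
  shows "instrument (I \<times> Outs \<times> J) (\<lambda>(i, u, j). scale_map (w i j u) (A u i))"
  unfolding instrument_def
proof (intro conjI ballI)
  show "finite (I \<times> Outs \<times> J)"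
    using fin by simp
  show "CP (case s of (i, u, j) \<Rightarrow> scale_map (w i j u) (A u i))" if "s \<in> I \<times> Outs \<times> J" for s
    using that inst w_nonneg by (auto simp: instrument_def intro!: CP_scale_map)
  show "TP (sum_maps (I \<times> Outs \<times> J) (\<lambda>(i, u, j). scale_map (w i j u) (A u i)))"
    unfolding TP_sum_maps_iff
  proof
    fix \<rho> :: "'x op"
    have "(\<Sum>s\<in>I \<times> Outs \<times> J. op_trace ((case s of (i, u, j) \<Rightarrow> scale_map (w i j u) (A u i)) \<rho>))
        = (\<Sum>i\<in>I. \<Sum>u\<in>Outs. (\<Sum>j\<in>J. complex_of_real (w i j u)) * op_trace (A u i \<rho>))"
      by (simp add: sum.cartesian_product' op_trace_scale_map sum_distrib_right)
    also have "\<dots> = (\<Sum>i\<in>I. complex_of_real (r i) * (\<Sum>u\<in>Outs. op_trace (A u i \<rho>)))"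
      using w_marginal by (simp add: sum_distrib_left flip: of_real_sum)
    also have "\<dots> = (\<Sum>i\<in>I. complex_of_real (r i)) * op_trace \<rho>"
      using inst by (simp add: instrument_def TP_sum_maps_iff sum_distrib_right)
    finally show "(\<Sum>s\<in>I \<times> Outs \<times> J. op_trace ((case s of (i, u, j) \<Rightarrow> scale_map (w i j u) (A u i)) \<rho>))
        = op_trace \<rho>"
      by (simp add: r_sum flip: of_real_sum)
  qed
qed

text \<open>If the total mass sum r I vanishes, so does every weight, and any normalised family (here a
  point mass at (i0, j0)) will do.\<close>

lemma normalise_weights:
  fixes R :: "'i \<Rightarrow> 'j \<Rightarrow> 'o \<Rightarrow> real"
  assumes fin: "finite I" "finite J" and i0: "i0 \<in> I" and j0: "j0 \<in> J"
    and R_nonneg: "\<And>i j u. i \<in> I \<Longrightarrow> j \<in> J \<Longrightarrow> u \<in> Outs \<Longrightarrow> R i j u \<ge> 0"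
    and R_marginal: "\<And>i u. i \<in> I \<Longrightarrow> u \<in> Outs \<Longrightarrow> (\<Sum>j\<in>J. R i j u) = r i"
    and r_nonneg: "\<And>i. i \<in> I \<Longrightarrow> r i \<ge> 0"
  obtains w r' where
    "\<And>i j u. i \<in> I \<Longrightarrow> j \<in> J \<Longrightarrow> u \<in> Outs \<Longrightarrow> w i j u \<ge> 0"
    "\<And>i u. i \<in> I \<Longrightarrow> u \<in> Outs \<Longrightarrow> (\<Sum>j\<in>J. w i j u) = r' i"
    "(\<Sum>i\<in>I. r' i) = 1"
    "\<And>i j u. i \<in> I \<Longrightarrow> j \<in> J \<Longrightarrow> u \<in> Outs \<Longrightarrow> sum r I * w i j u = R i j u"
proof (cases "sum r I > 0")
  case True
  show ?thesis
  proof
    show "R i j u / sum r I \<ge> 0" if "i \<in> I" "j \<in> J" "u \<in> Outs" for i j u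
      using R_nonneg[OF that] True by simp
    show "(\<Sum>j\<in>J. R i j u / sum r I) = r i / sum r I" if "i \<in> I" "u \<in> Outs" for i u
      using R_marginal[OF that] by (simp flip: sum_divide_distrib)
    show "(\<Sum>i\<in>I. r i / sum r I) = 1"
      using True by (simp flip: sum_divide_distrib)
    show "sum r I * (R i j u / sum r I) = R i j u" for i j u
      using True by simp
  qed
next
  case False
  then have "sum r I = 0"
    using r_nonneg by (simp add: sum_nonneg order.antisym)
  then have "\<forall>i\<in>I. r i = 0"
    using sum_nonneg_eq_0_iff[OF fin(1)] r_nonneg by blast
  then have R_zero: "R i j u = 0" if "i \<in> I" "j \<in> J" "u \<in> Outs" for i j u
    using R_marginal[of i u] R_nonneg that fin(2) by (simp add: sum_nonneg_eq_0_iff)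
  show ?thesis
  proof
    show "(if i = i0 \<and> j = j0 then 1 else 0 :: real) \<ge> 0" for i j
      by simp
    show "(\<Sum>j\<in>J. if i = i0 \<and> j = j0 then 1 else 0 :: real) = (if i = i0 then 1 else 0)" for i
      using fin(2) j0 by (simp add: sum.delta')
    show "(\<Sum>i\<in>I. if i = i0 then 1 else 0 :: real) = 1"
      using fin(1) i0 by (simp add: sum.delta')
    show "sum r I * (if i = i0 \<and> j = j0 then 1 else 0) = R i j u"
      if "i \<in> I" "j \<in> J" "u \<in> Outs" for i j u
      using \<open>\<forall>i\<in>I. r i = 0\<close> R_zero[OF that] by simp
  qed
qed

text \<open>Alice's instrument has outcomes (i, u, j): instrument i with outcome u, weighted by w i j u;
  the message j selects Bob's channel C j.\<close>

lemma scaled_LOCC_AB_exists: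
  fixes A :: "'o::countable \<Rightarrow> 'i::countable \<Rightarrow> ('x::finite, 'a::finite) qmap"
    and C :: "'j::countable \<Rightarrow> ('y::finite, 'b::finite) qmap"
  assumes fin: "finite I" "finite Outs" "finite J" and i0: "i0 \<in> I" and j0: "j0 \<in> J"
    and inst: "\<And>i. i \<in> I \<Longrightarrow> instrument Outs (\<lambda>u. A u i)"
    and chan: "\<And>j. j \<in> J \<Longrightarrow> CPTP (C j)"
    and R_nonneg: "\<And>i j u. i \<in> I \<Longrightarrow> j \<in> J \<Longrightarrow> u \<in> Outs \<Longrightarrow> R i j u \<ge> 0"
    and R_marginal: "\<And>i u. i \<in> I \<Longrightarrow> u \<in> Outs \<Longrightarrow> (\<Sum>j\<in>J. R i j u) = r i"
    and r_nonneg: "\<And>i. i \<in> I \<Longrightarrow> r i \<ge> 0"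
  shows "\<exists>M \<in> LOCC_AB. \<forall>\<rho> k l. complex_of_real (sum r I) * M \<rho> k l =
    (\<Sum>i\<in>I. \<Sum>u\<in>Outs. \<Sum>j\<in>J. complex_of_real (R i j u) * tensor_map (A u i) (C j) \<rho> k l)"
proof (rule normalise_weights[OF fin(1,3) i0 j0 R_nonneg R_marginal r_nonneg])
  fix w r'
  assume w_nonneg: "\<And>i j u. i \<in> I \<Longrightarrow> j \<in> J \<Longrightarrow> u \<in> Outs \<Longrightarrow> w i j u \<ge> 0"
    and w_marginal: "\<And>i u. i \<in> I \<Longrightarrow> u \<in> Outs \<Longrightarrow> (\<Sum>j\<in>J. w i j u) = r' i"
    and r'_sum: "(\<Sum>i\<in>I. r' i) = 1"
    and w_scaled: "\<And>i j u. i \<in> I \<Longrightarrow> j \<in> J \<Longrightarrow> u \<in> Outs \<Longrightarrow> sum r I * w i j u = R i j u"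
  let ?A = "\<lambda>(i, u, j). scale_map (w i j u) (A u i)" and ?C = "\<lambda>(i :: 'i, u :: 'o, j). C j"
  let ?M = "sum_maps (I \<times> Outs \<times> J) (\<lambda>s. tensor_map (?A s) (?C s))"
  have "?M \<in> LOCC_AB"
    using weighted_instrument[OF fin inst w_nonneg w_marginal r'_sum] chan
    by (intro LOCC_AB_intro) auto
  moreover have "complex_of_real (sum r I) * ?M \<rho> k l =
      (\<Sum>i\<in>I. \<Sum>u\<in>Outs. \<Sum>j\<in>J. complex_of_real (R i j u) * tensor_map (A u i) (C j) \<rho> k l)" for \<rho> k l
  proof -
    have "complex_of_real (sum r I) * ?M \<rho> k l =
        (\<Sum>i\<in>I. \<Sum>u\<in>Outs. \<Sum>j\<in>J. complex_of_real (sum r I * w i j u) * tensor_map (A u i) (C j) \<rho> k l)"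
      by (simp only: sum_maps_apply sum.cartesian_product' prod.case tensor_map_scale_left
          sum_distrib_left of_real_mult mult.assoc)
    also have "\<dots> = (\<Sum>i\<in>I. \<Sum>u\<in>Outs. \<Sum>j\<in>J. complex_of_real (R i j u) * tensor_map (A u i) (C j) \<rho> k l)"
      using w_scaled by (intro sum.cong refl) simp
    finally show ?thesis .
  qed
  ultimately show ?thesis
    by blast
qed

lemma scaled_LOCC_BA_exists:
  fixes B :: "'o::countable \<Rightarrow> 'i::countable \<Rightarrow> ('y::finite, 'b::finite) qmap"
    and C :: "'j::countable \<Rightarrow> ('x::finite, 'a::finite) qmap"
  assumes fin: "finite I" "finite Outs" "finite J" and i0: "i0 \<in> I" and j0: "j0 \<in> J"
    and inst: "\<And>i. i \<in> I \<Longrightarrow> instrument Outs (\<lambda>u. B u i)"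
    and chan: "\<And>j. j \<in> J \<Longrightarrow> CPTP (C j)"
    and R_nonneg: "\<And>i j u. i \<in> I \<Longrightarrow> j \<in> J \<Longrightarrow> u \<in> Outs \<Longrightarrow> R i j u \<ge> 0"
    and R_marginal: "\<And>i u. i \<in> I \<Longrightarrow> u \<in> Outs \<Longrightarrow> (\<Sum>j\<in>J. R i j u) = r i"
    and r_nonneg: "\<And>i. i \<in> I \<Longrightarrow> r i \<ge> 0"
  shows "\<exists>M \<in> LOCC_BA. \<forall>\<rho> k l. complex_of_real (sum r I) * M \<rho> k l =
    (\<Sum>i\<in>I. \<Sum>u\<in>Outs. \<Sum>j\<in>J. complex_of_real (R i j u) * tensor_map (C j) (B u i) \<rho> k l)"
proof (rule normalise_weights[OF fin(1,3) i0 j0 R_nonneg R_marginal r_nonneg])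
  fix w r'
  assume w_nonneg: "\<And>i j u. i \<in> I \<Longrightarrow> j \<in> J \<Longrightarrow> u \<in> Outs \<Longrightarrow> w i j u \<ge> 0"
    and w_marginal: "\<And>i u. i \<in> I \<Longrightarrow> u \<in> Outs \<Longrightarrow> (\<Sum>j\<in>J. w i j u) = r' i"
    and r'_sum: "(\<Sum>i\<in>I. r' i) = 1"
    and w_scaled: "\<And>i j u. i \<in> I \<Longrightarrow> j \<in> J \<Longrightarrow> u \<in> Outs \<Longrightarrow> sum r I * w i j u = R i j u"
  let ?B = "\<lambda>(i, u, j). scale_map (w i j u) (B u i)" and ?C = "\<lambda>(i :: 'i, u :: 'o, j). C j"
  let ?M = "sum_maps (I \<times> Outs \<times> J) (\<lambda>s. tensor_map (?C s) (?B s))"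
  have "?M \<in> LOCC_BA"
    using weighted_instrument[OF fin inst w_nonneg w_marginal r'_sum] chan
    by (intro LOCC_BA_intro) auto
  moreover have "complex_of_real (sum r I) * ?M \<rho> k l =
      (\<Sum>i\<in>I. \<Sum>u\<in>Outs. \<Sum>j\<in>J. complex_of_real (R i j u) * tensor_map (C j) (B u i) \<rho> k l)" for \<rho> k l
  proof -
    have "complex_of_real (sum r I) * ?M \<rho> k l =
        (\<Sum>i\<in>I. \<Sum>u\<in>Outs. \<Sum>j\<in>J. complex_of_real (sum r I * w i j u) * tensor_map (C j) (B u i) \<rho> k l)"
      by (simp only: sum_maps_apply sum.cartesian_product' prod.case tensor_map_scale_right
          sum_distrib_left of_real_mult mult.assoc)
    also have "\<dots> = (\<Sum>i\<in>I. \<Sum>u\<in>Outs. \<Sum>j\<in>J. complex_of_real (R i j u) * tensor_map (C j) (B u i) \<rho> k l)"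
      using w_scaled by (intro sum.cong refl) simp
    finally show ?thesis .
  qed
  ultimately show ?thesis
    by blast
qed

subsection \<open>Classical processes normalised on local strategies\<close>

definition normalised_on_strategies ::
    "'ia set \<Rightarrow> 'ib set \<Rightarrow> 'oa set \<Rightarrow> 'ob set \<Rightarrow> ('ia \<Rightarrow> 'ib \<Rightarrow> 'oa \<Rightarrow> 'ob \<Rightarrow> real) \<Rightarrow> bool" where
  "normalised_on_strategies IA IB OA OB p \<longleftrightarrow>
     (\<forall>pA pB. cond_prob IA OA pA \<longrightarrow> cond_prob IB OB pB \<longrightarrow>
        (\<Sum>iA\<in>IA. \<Sum>iB\<in>IB. \<Sum>oA\<in>OA. \<Sum>oB\<in>OB. p iA iB oA oB * pA oA iA * pB oB iB) = 1)"

lemma normalised_on_strategies_swap: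
  assumes "normalised_on_strategies IA IB OA OB p"
  shows "normalised_on_strategies IB IA OB OA (\<lambda>iB iA oB oA. p iA iB oA oB)"
  unfolding normalised_on_strategies_def
proof (intro allI impI)
  fix pB pA
  assume "cond_prob IB OB pB" "cond_prob IA OA pA"
  then have "(\<Sum>iA\<in>IA. \<Sum>iB\<in>IB. \<Sum>oA\<in>OA. \<Sum>oB\<in>OB. p iA iB oA oB * pA oA iA * pB oB iB) = 1"
    using assms by (simp add: normalised_on_strategies_def)
  moreover have "(\<Sum>iB\<in>IB. \<Sum>iA\<in>IA. \<Sum>oB\<in>OB. \<Sum>oA\<in>OA. p iA iB oA oB * pB oB iB * pA oA iA) =
      (\<Sum>iA\<in>IA. \<Sum>iB\<in>IB. \<Sum>oA\<in>OA. \<Sum>oB\<in>OB. p iA iB oA oB * pA oA iA * pB oB iB)"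
    by (subst sum.swap, intro sum.cong refl, subst sum.swap) (simp add: mult_ac)
  ultimately show "(\<Sum>iB\<in>IB. \<Sum>iA\<in>IA. \<Sum>oB\<in>OB. \<Sum>oA\<in>OA. p iA iB oA oB * pB oB iB * pA oA iA) = 1"
    by simp
qed

lemma cond_prob_deterministic:
  "finite Outs \<Longrightarrow> f ` I \<subseteq> Outs \<Longrightarrow> cond_prob I Outs (\<lambda>u i. if u = f i then 1 else 0)"
  unfolding cond_prob_def by (auto simp: sum.delta)

lemma normalised_on_deterministic_strategies:
  assumes norm: "normalised_on_strategies IA IB OA OB p" and fin: "finite OA" "finite OB"
    and f: "f ` IA \<subseteq> OA" and g: "g ` IB \<subseteq> OB"
  shows "(\<Sum>iA\<in>IA. \<Sum>iB\<in>IB. p iA iB (f iA) (g iB)) = 1"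
proof -
  have "(\<Sum>iA\<in>IA. \<Sum>iB\<in>IB. \<Sum>oA\<in>OA. \<Sum>oB\<in>OB.
      p iA iB oA oB * (if oA = f iA then 1 else 0) * (if oB = g iB then 1 else 0)) = 1"
    using norm cond_prob_deterministic[OF fin(1) f] cond_prob_deterministic[OF fin(2) g]
    unfolding normalised_on_strategies_def by blast
  moreover have "(\<Sum>oA\<in>OA. \<Sum>oB\<in>OB.
      p iA iB oA oB * (if oA = f iA then 1 else 0) * (if oB = g iB then 1 else 0)) = p iA iB (f iA) (g iB)"
    if "iA \<in> IA" "iB \<in> IB" for iA iB
  proof -
    have "f iA \<in> OA" "g iB \<in> OB"
      using that f g by auto
    then show ?thesis
      using fin by (simp add: if_distrib[of "\<lambda>x. _ * x"] sum.delta' cong: if_cong)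
  qed
  ultimately show ?thesis
    by simp
qed

lemma normalised_on_strategies_inputs_nonempty:
  assumes norm: "normalised_on_strategies IA IB OA OB p" and fin: "finite OA" "finite OB"
    and outputs: "IA \<noteq> {} \<Longrightarrow> OA \<noteq> {}" "IB \<noteq> {} \<Longrightarrow> OB \<noteq> {}"
  shows "IA \<noteq> {}" "IB \<noteq> {}"
proof -
  have "(\<Sum>iA\<in>IA. \<Sum>iB\<in>IB. p iA iB (SOME u. u \<in> OA) (SOME v. v \<in> OB)) = 1"
    using outputs
    by (intro normalised_on_deterministic_strategies[OF norm fin]) (use some_in_eq in blast)+
  then show "IA \<noteq> {}" "IB \<noteq> {}"
    by auto
qed

lemma sum_diff_pointwise_update:
  fixes h1 h2 :: "'a \<Rightarrow> 'b::ab_group_add"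
  assumes "finite S" "x \<in> S" "\<And>y. y \<in> S \<Longrightarrow> y \<noteq> x \<Longrightarrow> h1 y = h2 y"
  shows "sum h1 S - sum h2 S = h1 x - h2 x"
proof -
  have "sum h1 (S - {x}) = sum h2 (S - {x})"
    using assms(3) by (intro sum.cong) auto
  then show ?thesis
    using assms(1,2) by (simp add: sum.remove)
qed

text \<open>Changing Alice's deterministic output on a single input alters only that input's term of
  the normalisation sum.\<close>

lemma normalised_on_strategies_marginal:
  assumes norm: "normalised_on_strategies IA IB OA OB p" and fin: "finite IA" "finite OA" "finite OB"
    and iA: "iA \<in> IA" and o1: "o1 \<in> OA" and o2: "o2 \<in> OA" and g: "g ` IB \<subseteq> OB"
  shows "(\<Sum>iB\<in>IB. p iA iB o1 (g iB)) = (\<Sum>iB\<in>IB. p iA iB o2 (g iB))"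
proof -
  define h where "h u iA' = (\<Sum>iB\<in>IB. p iA' iB (if iA' = iA then u else o2) (g iB))" for u iA'
  have "sum (h o1) IA - sum (h o2) IA = h o1 iA - h o2 iA"
    by (rule sum_diff_pointwise_update[OF fin(1) iA]) (simp add: h_def)
  moreover have "sum (h u) IA = 1" if "u \<in> OA" for u
    unfolding h_def
    using that o2 by (intro normalised_on_deterministic_strategies[OF norm fin(2,3) _ g]) auto
  ultimately have "h o1 iA = h o2 iA"
    using o1 o2 by simp
  then show ?thesis
    by (simp add: h_def)
qed

lemma normalised_on_strategies_additive:
  assumes norm: "normalised_on_strategies IA IB OA OB p"
    and fin: "finite IA" "finite IB" "finite OA" "finite OB"
    and iA: "iA \<in> IA" and iB: "iB \<in> IB" and oA: "oA \<in> OA" and oA0: "oA0 \<in> OA"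
    and oB: "oB \<in> OB" and oB0: "oB0 \<in> OB"
  shows "p iA iB oA oB - p iA iB oA oB0 = p iA iB oA0 oB - p iA iB oA0 oB0"
proof -
  define h where "h u v iB' = p iA iB' u (if iB' = iB then v else oB0)" for u v iB'
  have diff: "sum (h u oB) IB - sum (h u oB0) IB = p iA iB u oB - p iA iB u oB0" for u
    by (subst sum_diff_pointwise_update[OF fin(2) iB]) (auto simp: h_def)
  have "sum (h oA v) IB = sum (h oA0 v) IB" if "v \<in> OB" for v
    unfolding h_def using that oB0
    by (intro normalised_on_strategies_marginal[OF norm fin(1,3,4) iA oA oA0]) auto
  then show ?thesis
    using diff[of oA] diff[of oA0] oB oB0 by simp
qed

text \<open>With u the outcome minimising p(iA,iB|u,oB0), take R1 = p(.|oA,oB0) - p(.|u,oB0); by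
  additivity the remainder R2 equals p(.|u,oB) and is therefore nonnegative.\<close>

lemma normalised_on_strategies_separable:
  fixes p :: "'ia \<Rightarrow> 'ib \<Rightarrow> 'oa \<Rightarrow> 'ob \<Rightarrow> real"
  assumes norm: "normalised_on_strategies IA IB OA OB p"
    and fin: "finite IA" "finite IB" "finite OA" "finite OB"
    and p_nonneg: "\<And>iA iB oA oB. iA \<in> IA \<Longrightarrow> iB \<in> IB \<Longrightarrow> oA \<in> OA \<Longrightarrow> oB \<in> OB \<Longrightarrow>
      p iA iB oA oB \<ge> 0"
    and oA0: "oA0 \<in> OA" and oB0: "oB0 \<in> OB"
  obtains R1 R2 where
    "\<And>iA iB oA. oA \<in> OA \<Longrightarrow> R1 iA iB oA \<ge> 0"
    "\<And>iA iB oB. iA \<in> IA \<Longrightarrow> iB \<in> IB \<Longrightarrow> oB \<in> OB \<Longrightarrow> R2 iA iB oB \<ge> 0"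
    "\<And>iA iB oA oB. iA \<in> IA \<Longrightarrow> iB \<in> IB \<Longrightarrow> oA \<in> OA \<Longrightarrow> oB \<in> OB \<Longrightarrow>
       p iA iB oA oB = R1 iA iB oA + R2 iA iB oB"
proof
  define m where "m iA iB = Min ((\<lambda>u. p iA iB u oB0) ` OA)" for iA iB
  show "p iA iB oA oB0 - m iA iB \<ge> 0" if "oA \<in> OA" for iA iB oA
    unfolding m_def using fin(3) that by (simp add: Min_le)
  show "p iA iB oA0 oB - p iA iB oA0 oB0 + m iA iB \<ge> 0"
    if "iA \<in> IA" "iB \<in> IB" "oB \<in> OB" for iA iB oB
  proof -
    have "m iA iB \<in> (\<lambda>u. p iA iB u oB0) ` OA"
      unfolding m_def using fin(3) oA0 by (intro Min_in) auto
    then obtain u where u: "u \<in> OA" "m iA iB = p iA iB u oB0"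
      by auto
    then have "p iA iB oA0 oB - p iA iB oA0 oB0 + m iA iB = p iA iB u oB"
      using normalised_on_strategies_additive[OF norm fin that(1,2) u(1) oA0 that(3) oB0] by simp
    then show ?thesis
      using p_nonneg that u(1) by simp
  qed
  show "p iA iB oA oB = (p iA iB oA oB0 - m iA iB) + (p iA iB oA0 oB - p iA iB oA0 oB0 + m iA iB)"
    if "iA \<in> IA" "iB \<in> IB" "oA \<in> OA" "oB \<in> OB" for iA iB oA oB
    using normalised_on_strategies_additive[OF norm fin that(1,2,3) oA0 that(4) oB0] by simp
qed

lemma separable_marginal:
  assumes norm: "normalised_on_strategies IA IB OA OB p"
    and fin: "finite IA" "finite IB" "finite OA" "finite OB"
    and p_split: "\<And>iA iB oA oB. iA \<in> IA \<Longrightarrow> iB \<in> IB \<Longrightarrow> oA \<in> OA \<Longrightarrow> oB \<in> OB \<Longrightarrow>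
      p iA iB oA oB = RA iA iB oA + RB iA iB oB"
    and iA: "iA \<in> IA" and o1: "o1 \<in> OA" and o2: "o2 \<in> OA" and oB0: "oB0 \<in> OB"
  shows "(\<Sum>iB\<in>IB. RA iA iB o1) = (\<Sum>iB\<in>IB. RA iA iB o2)"
proof -
  have "(\<Sum>iB\<in>IB. p iA iB o1 oB0) = (\<Sum>iB\<in>IB. p iA iB o2 oB0)"
    using normalised_on_strategies_marginal[OF norm fin(1,3,4) iA o1 o2, of "\<lambda>_. oB0"] oB0 by auto
  moreover have "(\<Sum>iB\<in>IB. p iA iB u oB0) = (\<Sum>iB\<in>IB. RA iA iB u) + (\<Sum>iB\<in>IB. RB iA iB oB0)"
    if "u \<in> OA" for u
    using p_split iA that oB0 by (simp add: sum.distrib)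
  ultimately show ?thesis
    using o1 o2 by simp
qed

lemma separable_marginal':
  assumes norm: "normalised_on_strategies IA IB OA OB p"
    and fin: "finite IA" "finite IB" "finite OA" "finite OB"
    and p_split: "\<And>iA iB oA oB. iA \<in> IA \<Longrightarrow> iB \<in> IB \<Longrightarrow> oA \<in> OA \<Longrightarrow> oB \<in> OB \<Longrightarrow>
      p iA iB oA oB = RA iA iB oA + RB iA iB oB"
    and iB: "iB \<in> IB" and o1: "o1 \<in> OB" and o2: "o2 \<in> OB" and oA0: "oA0 \<in> OA"
  shows "(\<Sum>iA\<in>IA. RB iA iB o1) = (\<Sum>iA\<in>IA. RB iA iB o2)"
proof -
  have "p iA iB' oA oB = RB iA iB' oB + RA iA iB' oA"
    if "iB' \<in> IB" "iA \<in> IA" "oB \<in> OB" "oA \<in> OA" for iB' iA oB oA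
    using p_split[OF that(2,1,4,3)] by (simp add: add.commute)
  then show ?thesis
    by (rule separable_marginal[where RA = "\<lambda>iB iA oB. RB iA iB oB" and RB = "\<lambda>iB iA oA. RA iA iB oA",
        OF normalised_on_strategies_swap[OF norm] fin(2,1,4,3) _ iB o1 o2 oA0])
qed

lemma normalised_on_strategies_decomposition:
  fixes p :: "'ia \<Rightarrow> 'ib \<Rightarrow> 'oa \<Rightarrow> 'ob \<Rightarrow> real"
  assumes norm: "normalised_on_strategies IA IB OA OB p"
    and fin: "finite IA" "finite IB" "finite OA" "finite OB"
    and prob: "cond_prob (OA \<times> OB) (IA \<times> IB) (\<lambda>(iA, iB) (oA, oB). p iA iB oA oB)"
    and oA0: "oA0 \<in> OA" and oB0: "oB0 \<in> OB"
  obtains R1 R2 r1 r2 where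
    "\<And>iA iB oA. iA \<in> IA \<Longrightarrow> iB \<in> IB \<Longrightarrow> oA \<in> OA \<Longrightarrow> R1 iA iB oA \<ge> 0"
    "\<And>iA iB oB. iA \<in> IA \<Longrightarrow> iB \<in> IB \<Longrightarrow> oB \<in> OB \<Longrightarrow> R2 iA iB oB \<ge> 0"
    "\<And>iA iB oA oB. iA \<in> IA \<Longrightarrow> iB \<in> IB \<Longrightarrow> oA \<in> OA \<Longrightarrow> oB \<in> OB \<Longrightarrow>
       p iA iB oA oB = R1 iA iB oA + R2 iA iB oB"
    "\<And>iA oA. iA \<in> IA \<Longrightarrow> oA \<in> OA \<Longrightarrow> (\<Sum>iB\<in>IB. R1 iA iB oA) = r1 iA"
    "\<And>iB oB. iB \<in> IB \<Longrightarrow> oB \<in> OB \<Longrightarrow> (\<Sum>iA\<in>IA. R2 iA iB oB) = r2 iB"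
    "\<And>iA. iA \<in> IA \<Longrightarrow> r1 iA \<ge> 0" "\<And>iB. iB \<in> IB \<Longrightarrow> r2 iB \<ge> 0"
    "sum r1 IA + sum r2 IB = 1"
proof -
  have p_nonneg: "p iA iB oA oB \<ge> 0"
    if "iA \<in> IA" "iB \<in> IB" "oA \<in> OA" "oB \<in> OB" for iA iB oA oB
    using prob that unfolding cond_prob_def by fastforce
  show thesis
  proof (rule normalised_on_strategies_separable[OF norm fin p_nonneg oA0 oB0])
    fix R1 R2
    assume R1_nonneg: "\<And>iA iB oA. oA \<in> OA \<Longrightarrow> R1 iA iB oA \<ge> 0"
      and R2_nonneg: "\<And>iA iB oB. iA \<in> IA \<Longrightarrow> iB \<in> IB \<Longrightarrow> oB \<in> OB \<Longrightarrow> R2 iA iB oB \<ge> 0"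
      and p_split: "\<And>iA iB oA oB. iA \<in> IA \<Longrightarrow> iB \<in> IB \<Longrightarrow> oA \<in> OA \<Longrightarrow> oB \<in> OB \<Longrightarrow>
         p iA iB oA oB = R1 iA iB oA + R2 iA iB oB"
    define r1 where "r1 iA = (\<Sum>iB\<in>IB. R1 iA iB oA0)" for iA
    define r2 where "r2 iB = (\<Sum>iA\<in>IA. R2 iA iB oB0)" for iB
    show thesis
    proof (rule that[OF _ R2_nonneg p_split])
      show "R1 iA iB oA \<ge> 0" if "iA \<in> IA" "iB \<in> IB" "oA \<in> OA" for iA iB oA
        using R1_nonneg that(3) .
      show "(\<Sum>iB\<in>IB. R1 iA iB oA) = r1 iA" if "iA \<in> IA" "oA \<in> OA" for iA oA
        unfolding r1_def by (rule separable_marginal[OF norm fin p_split that oA0 oB0])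
      show "(\<Sum>iA\<in>IA. R2 iA iB oB) = r2 iB" if "iB \<in> IB" "oB \<in> OB" for iB oB
        unfolding r2_def by (rule separable_marginal'[OF norm fin p_split that oB0 oA0])
      show "r1 iA \<ge> 0" for iA
        unfolding r1_def using R1_nonneg oA0 by (simp add: sum_nonneg)
      show "r2 iB \<ge> 0" if "iB \<in> IB" for iB
        unfolding r2_def using R2_nonneg that oB0 by (simp add: sum_nonneg)
      have "sum r1 IA + sum r2 IB = (\<Sum>iA\<in>IA. \<Sum>iB\<in>IB. p iA iB oA0 oB0)"
        unfolding r1_def r2_def using p_split oA0 oB0 by (simp add: sum.distrib sum.swap[of _ IB])
      also have "\<dots> = 1"
        using prob oA0 oB0 by (simp add: cond_prob_def sum.cartesian_product case_prod_beta)
      finally show "sum r1 IA + sum r2 IB = 1" .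
    qed
  qed
qed

subsection \<open>LOCQP maps are mixtures of one-way LOCC maps\<close>

lemma sum_separable_weights:
  fixes T :: "'ia \<Rightarrow> 'ib \<Rightarrow> 'oa \<Rightarrow> 'ob \<Rightarrow> complex"
  assumes "\<And>iA iB oA oB. iA \<in> IA \<Longrightarrow> iB \<in> IB \<Longrightarrow> oA \<in> OA \<Longrightarrow> oB \<in> OB \<Longrightarrow>
      p iA iB oA oB = R1 iA iB oA + R2 iA iB oB"
  shows "(\<Sum>iA\<in>IA. \<Sum>iB\<in>IB. \<Sum>oA\<in>OA. \<Sum>oB\<in>OB. complex_of_real (p iA iB oA oB) * T iA iB oA oB) =
    (\<Sum>iA\<in>IA. \<Sum>oA\<in>OA. \<Sum>iB\<in>IB. complex_of_real (R1 iA iB oA) * (\<Sum>oB\<in>OB. T iA iB oA oB)) +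
    (\<Sum>iB\<in>IB. \<Sum>oB\<in>OB. \<Sum>iA\<in>IA. complex_of_real (R2 iA iB oB) * (\<Sum>oA\<in>OA. T iA iB oA oB))"
proof -
  have "(\<Sum>iA\<in>IA. \<Sum>iB\<in>IB. \<Sum>oA\<in>OA. \<Sum>oB\<in>OB. complex_of_real (p iA iB oA oB) * T iA iB oA oB) =
      (\<Sum>iA\<in>IA. \<Sum>iB\<in>IB. \<Sum>oA\<in>OA. \<Sum>oB\<in>OB. complex_of_real (R1 iA iB oA) * T iA iB oA oB) +
      (\<Sum>iA\<in>IA. \<Sum>iB\<in>IB. \<Sum>oA\<in>OA. \<Sum>oB\<in>OB. complex_of_real (R2 iA iB oB) * T iA iB oA oB)"
    using assms by (simp add: distrib_right sum.distrib)
  also have "(\<Sum>iA\<in>IA. \<Sum>iB\<in>IB. \<Sum>oA\<in>OA. \<Sum>oB\<in>OB. complex_of_real (R1 iA iB oA) * T iA iB oA oB) =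
      (\<Sum>iA\<in>IA. \<Sum>oA\<in>OA. \<Sum>iB\<in>IB. complex_of_real (R1 iA iB oA) * (\<Sum>oB\<in>OB. T iA iB oA oB))"
    by (simp add: sum_distrib_left sum.swap[of _ IB])
  also have "(\<Sum>iA\<in>IA. \<Sum>iB\<in>IB. \<Sum>oA\<in>OA. \<Sum>oB\<in>OB. complex_of_real (R2 iA iB oB) * T iA iB oA oB) =
      (\<Sum>iB\<in>IB. \<Sum>iA\<in>IA. \<Sum>oB\<in>OB. \<Sum>oA\<in>OA. complex_of_real (R2 iA iB oB) * T iA iB oA oB)"
    by (subst sum.swap, intro sum.cong refl, rule sum.swap)
  also have "\<dots> = (\<Sum>iB\<in>IB. \<Sum>oB\<in>OB. \<Sum>iA\<in>IA. complex_of_real (R2 iA iB oB) * (\<Sum>oA\<in>OA. T iA iB oA oB))"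
    by (intro sum.cong refl, subst sum.swap) (simp add: sum_distrib_left)
  finally show ?thesis .
qed

lemma one_way_mixture_of_normalised_process:
  fixes p :: "'ia::countable \<Rightarrow> 'ib::countable \<Rightarrow> 'oa::countable \<Rightarrow> 'ob::countable \<Rightarrow> real"
    and A :: "'oa \<Rightarrow> 'ia \<Rightarrow> ('x::finite, 'a::finite) qmap" and B :: "'ob \<Rightarrow> 'ib \<Rightarrow> ('y::finite, 'b::finite) qmap"
  assumes norm: "normalised_on_strategies IA IB OA OB p"
    and fin: "finite IA" "finite IB" "finite OA" "finite OB"
    and prob: "cond_prob (OA \<times> OB) (IA \<times> IB) (\<lambda>(iA, iB) (oA, oB). p iA iB oA oB)"
    and instA: "\<And>iA. iA \<in> IA \<Longrightarrow> instrument OA (\<lambda>oA. A oA iA)"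
    and instB: "\<And>iB. iB \<in> IB \<Longrightarrow> instrument OB (\<lambda>oB. B oB iB)"
    and iA0: "iA0 \<in> IA" and iB0: "iB0 \<in> IB"
  shows "\<exists>q. 0 \<le> q \<and> q \<le> 1 \<and> (\<exists>\<M>1 \<in> LOCC_AB. \<exists>\<M>2 \<in> LOCC_BA. \<forall>\<rho> k l.
    (\<Sum>iA\<in>IA. \<Sum>iB\<in>IB. \<Sum>oA\<in>OA. \<Sum>oB\<in>OB.
       complex_of_real (p iA iB oA oB) * tensor_map (A oA iA) (B oB iB) \<rho> k l) =
    complex_of_real q * \<M>1 \<rho> k l + complex_of_real (1 - q) * \<M>2 \<rho> k l)"
proof -
  obtain oA0 oB0 where oA0: "oA0 \<in> OA" and oB0: "oB0 \<in> OB"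
    using instrument_outcomes_nonempty[OF instA[OF iA0]] instrument_outcomes_nonempty[OF instB[OF iB0]]
    by blast
  obtain R1 R2 r1 r2 where
    R1_nonneg: "\<And>iA iB oA. iA \<in> IA \<Longrightarrow> iB \<in> IB \<Longrightarrow> oA \<in> OA \<Longrightarrow> R1 iA iB oA \<ge> 0" and
    R2_nonneg: "\<And>iA iB oB. iA \<in> IA \<Longrightarrow> iB \<in> IB \<Longrightarrow> oB \<in> OB \<Longrightarrow> R2 iA iB oB \<ge> 0" and
    p_split: "\<And>iA iB oA oB. iA \<in> IA \<Longrightarrow> iB \<in> IB \<Longrightarrow> oA \<in> OA \<Longrightarrow> oB \<in> OB \<Longrightarrow>
       p iA iB oA oB = R1 iA iB oA + R2 iA iB oB" and
    r1: "\<And>iA oA. iA \<in> IA \<Longrightarrow> oA \<in> OA \<Longrightarrow> (\<Sum>iB\<in>IB. R1 iA iB oA) = r1 iA" and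
    r2: "\<And>iB oB. iB \<in> IB \<Longrightarrow> oB \<in> OB \<Longrightarrow> (\<Sum>iA\<in>IA. R2 iA iB oB) = r2 iB" and
    r1_nonneg: "\<And>iA. iA \<in> IA \<Longrightarrow> r1 iA \<ge> 0" and r2_nonneg: "\<And>iB. iB \<in> IB \<Longrightarrow> r2 iB \<ge> 0" and
    r_sum: "sum r1 IA + sum r2 IB = 1"
    by (rule normalised_on_strategies_decomposition[OF norm fin prob oA0 oB0]) blast
  define CA where "CA iA = sum_maps OA (\<lambda>oA. A oA iA)" for iA
  define CB where "CB iB = sum_maps OB (\<lambda>oB. B oB iB)" for iB
  have CA: "\<And>iA. iA \<in> IA \<Longrightarrow> CPTP (CA iA)" and CB: "\<And>iB. iB \<in> IB \<Longrightarrow> CPTP (CB iB)"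
    using instA instB by (auto simp: CA_def CB_def intro: CPTP_sum_maps_instrument)
  obtain \<M>1 where \<M>1: "\<M>1 \<in> LOCC_AB" and \<M>1_eq: "\<And>\<rho> k l. complex_of_real (sum r1 IA) * \<M>1 \<rho> k l =
      (\<Sum>iA\<in>IA. \<Sum>oA\<in>OA. \<Sum>iB\<in>IB. complex_of_real (R1 iA iB oA) * tensor_map (A oA iA) (CB iB) \<rho> k l)"
    using scaled_LOCC_AB_exists[where A = A and C = CB and R = R1 and r = r1,
      OF fin(1,3,2) iA0 iB0 instA CB R1_nonneg r1 r1_nonneg] by blast
  obtain \<M>2 where \<M>2: "\<M>2 \<in> LOCC_BA" and \<M>2_eq: "\<And>\<rho> k l. complex_of_real (sum r2 IB) * \<M>2 \<rho> k l =
      (\<Sum>iB\<in>IB. \<Sum>oB\<in>OB. \<Sum>iA\<in>IA. complex_of_real (R2 iA iB oB) * tensor_map (CA iA) (B oB iB) \<rho> k l)"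
    using scaled_LOCC_BA_exists[where B = B and C = CA and R = "\<lambda>iB iA oB. R2 iA iB oB" and r = r2,
      OF fin(2,4,1) iB0 iA0 instB CA] R2_nonneg r2 r2_nonneg by blast
  define q where "q = sum r1 IA"
  have q_bounds: "0 \<le> q" "q \<le> 1" and one_minus_q: "1 - q = sum r2 IB"
    using r_sum r1_nonneg r2_nonneg sum_nonneg[of IB r2] by (auto simp: q_def intro: sum_nonneg)
  have "(\<Sum>iA\<in>IA. \<Sum>iB\<in>IB. \<Sum>oA\<in>OA. \<Sum>oB\<in>OB.
       complex_of_real (p iA iB oA oB) * tensor_map (A oA iA) (B oB iB) \<rho> k l) =
    complex_of_real q * \<M>1 \<rho> k l + complex_of_real (1 - q) * \<M>2 \<rho> k l" for \<rho> k l
  proof -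
    have "(\<Sum>iA\<in>IA. \<Sum>iB\<in>IB. \<Sum>oA\<in>OA. \<Sum>oB\<in>OB.
        complex_of_real (p iA iB oA oB) * tensor_map (A oA iA) (B oB iB) \<rho> k l) =
      (\<Sum>iA\<in>IA. \<Sum>oA\<in>OA. \<Sum>iB\<in>IB. complex_of_real (R1 iA iB oA) *
         (\<Sum>oB\<in>OB. tensor_map (A oA iA) (B oB iB) \<rho> k l)) +
      (\<Sum>iB\<in>IB. \<Sum>oB\<in>OB. \<Sum>iA\<in>IA. complex_of_real (R2 iA iB oB) *
         (\<Sum>oA\<in>OA. tensor_map (A oA iA) (B oB iB) \<rho> k l))"
      by (rule sum_separable_weights[OF p_split])
    also have "\<dots> = complex_of_real q * \<M>1 \<rho> k l + complex_of_real (1 - q) * \<M>2 \<rho> k l"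
      unfolding one_minus_q unfolding q_def \<M>1_eq \<M>2_eq
      by (simp add: CA_def CB_def tensor_map_sum_maps_left tensor_map_sum_maps_right)
    finally show ?thesis .
  qed
  then show ?thesis
    using \<M>1 \<M>2 q_bounds by blast
qed

lemma LOCQP_imp_one_way_mixture:
  fixes \<M> :: "('x::finite \<times> 'y::finite, 'a::finite \<times> 'b::finite) qmap"
  assumes "\<M> \<in> LOCQP"
  shows "\<exists>q::real. 0 \<le> q \<and> q \<le> 1 \<and>
    (\<exists>\<M>1 \<in> LOCC_AB. \<exists>\<M>2 \<in> LOCC_BA.
       \<M> = (\<lambda>\<rho> k l. complex_of_real q * \<M>1 \<rho> k l + complex_of_real (1 - q) * \<M>2 \<rho> k l))"
proof -
  obtain IA IB OA OB :: "nat set" and p :: "nat \<Rightarrow> nat \<Rightarrow> nat \<Rightarrow> nat \<Rightarrow> real"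
    and A :: "nat \<Rightarrow> nat \<Rightarrow> ('x, 'a) qmap" and B :: "nat \<Rightarrow> nat \<Rightarrow> ('y, 'b) qmap" where
    fin: "finite IA" "finite IB" "finite OA" "finite OB" and
    instA: "\<forall>iA\<in>IA. instrument OA (\<lambda>oA. A oA iA)" and
    instB: "\<forall>iB\<in>IB. instrument OB (\<lambda>oB. B oB iB)" and
    prob: "cond_prob (OA \<times> OB) (IA \<times> IB) (\<lambda>(iA, iB) (oA, oB). p iA iB oA oB)" and
    norm: "\<forall>pA pB. cond_prob IA OA pA \<longrightarrow> cond_prob IB OB pB \<longrightarrow>
       (\<Sum>iA\<in>IA. \<Sum>iB\<in>IB. \<Sum>oA\<in>OA. \<Sum>oB\<in>OB. p iA iB oA oB * pA oA iA * pB oB iB) = 1" and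
    \<M>_eq: "\<M> = (\<lambda>\<rho> k l. \<Sum>iA\<in>IA. \<Sum>iB\<in>IB. \<Sum>oA\<in>OA. \<Sum>oB\<in>OB.
       complex_of_real (p iA iB oA oB) * tensor_map (A oA iA) (B oB iB) \<rho> k l)"
    using assms unfolding LOCQP_def mem_Collect_eq by (elim exE conjE) blast
  have norm: "normalised_on_strategies IA IB OA OB p"
    using norm unfolding normalised_on_strategies_def .
  have "IA \<noteq> {}" "IB \<noteq> {}"
    using normalised_on_strategies_inputs_nonempty[OF norm fin(3,4)] instA instB
      instrument_outcomes_nonempty by blast+
  then obtain iA0 iB0 where "iA0 \<in> IA" "iB0 \<in> IB"
    by blast
  then show ?thesis
    using one_way_mixture_of_normalised_process[OF norm fin prob _ _ \<open>iA0 \<in> IA\<close> \<open>iB0 \<in> IB\<close>, of A B]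
      instA instB \<M>_eq by (simp add: fun_eq_iff)
qed

subsection \<open>Mixtures of one-way LOCC maps are LOCQP maps\<close>

lemma sum_swap_outer_pairs:
  "(\<Sum>a\<in>A. \<Sum>b\<in>B. \<Sum>c\<in>C. \<Sum>d\<in>D. g a b c d) = (\<Sum>c\<in>C. \<Sum>d\<in>D. \<Sum>a\<in>A. \<Sum>b\<in>B. g a b c d)"
proof -
  have "(\<Sum>a\<in>A. \<Sum>b\<in>B. \<Sum>c\<in>C. \<Sum>d\<in>D. g a b c d) = (\<Sum>a\<in>A. \<Sum>c\<in>C. \<Sum>d\<in>D. \<Sum>b\<in>B. g a b c d)"
    by (intro sum.cong refl, subst sum.swap, intro sum.cong refl, rule sum.swap)
  also have "\<dots> = (\<Sum>c\<in>C. \<Sum>d\<in>D. \<Sum>a\<in>A. \<Sum>b\<in>B. g a b c d)"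
    by (subst sum.swap, intro sum.cong refl, rule sum.swap)
  finally show ?thesis .
qed

lemma sum_delta_pair:
  assumes "finite A" "finite B" "a \<in> A" "b \<in> B"
  shows "(\<Sum>x\<in>A. \<Sum>y\<in>B. if x = a \<and> y = b then G x y else 0) = G a b"
proof -
  have "(\<Sum>x\<in>A. \<Sum>y\<in>B. if x = a \<and> y = b then G x y else 0) =
      (\<Sum>x\<in>A. if x = a then (\<Sum>y\<in>B. if y = b then G x y else 0) else 0)"
    by (intro sum.cong refl) auto
  then show ?thesis
    using assms by (simp add: sum.delta')
qed

text \<open>The LOCQP process simulating the mixture: input 0 tells a party to act first, input
  Suc m tells it that the other party acted first and obtained outcome m.\<close>

definition mixture_process :: "real \<Rightarrow> nat \<Rightarrow> nat \<Rightarrow> nat \<Rightarrow> nat \<Rightarrow> real" where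
  "mixture_process q iA iB oA oB =
     (if iA = 0 \<and> iB = Suc oA then q else 0) + (if iA = Suc oB \<and> iB = 0 then 1 - q else 0)"

lemma sum_mixture_process:
  fixes F :: "nat \<Rightarrow> nat \<Rightarrow> nat \<Rightarrow> nat \<Rightarrow> 'c::real_algebra_1"
  assumes fin: "finite IA" "finite IB" and zero: "0 \<in> IA" "0 \<in> IB"
    and Suc: "Suc ` OB \<subseteq> IA" "Suc ` OA \<subseteq> IB"
  shows "(\<Sum>iA\<in>IA. \<Sum>iB\<in>IB. \<Sum>oA\<in>OA. \<Sum>oB\<in>OB. of_real (mixture_process q iA iB oA oB) * F iA iB oA oB) =
    of_real q * (\<Sum>oA\<in>OA. \<Sum>oB\<in>OB. F 0 (Suc oA) oA oB) +
    of_real (1 - q) * (\<Sum>oA\<in>OA. \<Sum>oB\<in>OB. F (Suc oB) 0 oA oB)"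
proof -
  have "(\<Sum>iA\<in>IA. \<Sum>iB\<in>IB. \<Sum>oA\<in>OA. \<Sum>oB\<in>OB. of_real (mixture_process q iA iB oA oB) * F iA iB oA oB) =
      (\<Sum>oA\<in>OA. \<Sum>oB\<in>OB. \<Sum>iA\<in>IA. \<Sum>iB\<in>IB. of_real (mixture_process q iA iB oA oB) * F iA iB oA oB)"
    by (rule sum_swap_outer_pairs)
  also have "\<dots> = (\<Sum>oA\<in>OA. \<Sum>oB\<in>OB. of_real q * F 0 (Suc oA) oA oB + of_real (1 - q) * F (Suc oB) 0 oA oB)"
  proof (intro sum.cong refl)
    fix oA oB
    assume "oA \<in> OA" "oB \<in> OB"
    then have "Suc oA \<in> IB" "Suc oB \<in> IA"
      using Suc by auto
    then show "(\<Sum>iA\<in>IA. \<Sum>iB\<in>IB. of_real (mixture_process q iA iB oA oB) * F iA iB oA oB) =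
        of_real q * F 0 (Suc oA) oA oB + of_real (1 - q) * F (Suc oB) 0 oA oB"
      by (simp add: mixture_process_def distrib_right if_distrib[of of_real] if_distrib[of "\<lambda>x. x * _"]
          sum.distrib sum_delta_pair[OF fin] zero cong: if_cong)
  qed
  finally show ?thesis
    by (simp add: sum.distrib sum_distrib_left)
qed

lemma cond_prob_mixture_process:
  assumes fin: "finite IA" "finite IB" and zero: "0 \<in> IA" "0 \<in> IB"
    and Suc: "Suc ` OB \<subseteq> IA" "Suc ` OA \<subseteq> IB" and q: "0 \<le> q" "q \<le> 1"
  shows "cond_prob (OA \<times> OB) (IA \<times> IB) (\<lambda>(iA, iB) (oA, oB). mixture_process q iA iB oA oB)"
  unfolding cond_prob_def
proof (intro ballI conjI)
  fix u r
  show "0 \<le> (\<lambda>(iA, iB) (oA, oB). mixture_process q iA iB oA oB) r u"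
    using q by (auto simp: mixture_process_def split: prod.split)
  assume "u \<in> OA \<times> OB"
  then obtain oA oB where o: "oA \<in> OA" "oB \<in> OB" and u: "u = (oA, oB)"
    by blast
  have "(\<Sum>iA\<in>IA. \<Sum>iB\<in>IB. \<Sum>oA'\<in>{oA}. \<Sum>oB'\<in>{oB}. of_real (mixture_process q iA iB oA' oB') * (1 :: real)) =
      of_real q * (\<Sum>oA'\<in>{oA}. \<Sum>oB'\<in>{oB}. 1) + of_real (1 - q) * (\<Sum>oA'\<in>{oA}. \<Sum>oB'\<in>{oB}. 1)"
    by (rule sum_mixture_process[OF fin zero]) (use Suc o in auto)
  then show "(\<Sum>r\<in>IA \<times> IB. (\<lambda>(iA, iB) (oA, oB). mixture_process q iA iB oA oB) r u) = 1"
    by (simp add: u sum.cartesian_product')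
qed

lemma normalised_on_strategies_mixture_process:
  assumes fin: "finite IA" "finite IB" and zero: "0 \<in> IA" "0 \<in> IB"
    and Suc: "Suc ` OB \<subseteq> IA" "Suc ` OA \<subseteq> IB"
  shows "normalised_on_strategies IA IB OA OB (mixture_process q)"
  unfolding normalised_on_strategies_def
proof (intro allI impI)
  fix pA pB
  assume pA: "cond_prob IA OA pA" and pB: "cond_prob IB OB pB"
  have "(\<Sum>oA\<in>OA. \<Sum>oB\<in>OB. pA oA 0 * pB oB (Suc oA)) = (\<Sum>oA\<in>OA. pA oA 0)"
    using pB Suc by (intro sum.cong refl) (auto simp: cond_prob_def simp flip: sum_distrib_left)
  also have "\<dots> = 1"
    using pA zero by (simp add: cond_prob_def)
  finally have Alice_first: "(\<Sum>oA\<in>OA. \<Sum>oB\<in>OB. pA oA 0 * pB oB (Suc oA)) = 1" .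
  have "(\<Sum>oA\<in>OA. \<Sum>oB\<in>OB. pA oA (Suc oB) * pB oB 0) = (\<Sum>oB\<in>OB. pB oB 0)"
    using pA Suc by (subst sum.swap, intro sum.cong refl) (auto simp: cond_prob_def simp flip: sum_distrib_right)
  also have "\<dots> = 1"
    using pB zero by (simp add: cond_prob_def)
  finally have Bob_first: "(\<Sum>oA\<in>OA. \<Sum>oB\<in>OB. pA oA (Suc oB) * pB oB 0) = 1" .
  show "(\<Sum>iA\<in>IA. \<Sum>iB\<in>IB. \<Sum>oA\<in>OA. \<Sum>oB\<in>OB. mixture_process q iA iB oA oB * pA oA iA * pB oB iB) = 1"
    using Alice_first Bob_first sum_mixture_process[OF fin zero Suc, of q "\<lambda>iA iB oA oB. pA oA iA * pB oB iB"]
    by (simp add: mult.assoc)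
qed

lemma one_way_mixture_imp_LOCQP:
  fixes \<M> :: "('x::finite \<times> 'y::finite, 'a::finite \<times> 'b::finite) qmap"
  assumes q: "0 \<le> q" "q \<le> 1" and "\<M>1 \<in> LOCC_AB" and "\<M>2 \<in> LOCC_BA"
    and \<M>_eq: "\<M> = (\<lambda>\<rho> k l. complex_of_real q * \<M>1 \<rho> k l + complex_of_real (1 - q) * \<M>2 \<rho> k l)"
  shows "\<M> \<in> LOCQP"
proof -
  obtain L1 and A1 :: "nat \<Rightarrow> ('x, 'a) qmap" and B1 :: "nat \<Rightarrow> ('y, 'b) qmap" where
    inst1: "instrument L1 A1" and chan1: "\<forall>m\<in>L1. CPTP (B1 m)"
    and \<M>1_eq: "\<M>1 = sum_maps L1 (\<lambda>m. tensor_map (A1 m) (B1 m))"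
    using \<open>\<M>1 \<in> LOCC_AB\<close> unfolding LOCC_AB_def by blast
  obtain L2 and A2 :: "nat \<Rightarrow> ('x, 'a) qmap" and B2 :: "nat \<Rightarrow> ('y, 'b) qmap" where
    inst2: "instrument L2 B2" and chan2: "\<forall>m\<in>L2. CPTP (A2 m)"
    and \<M>2_eq: "\<M>2 = sum_maps L2 (\<lambda>m. tensor_map (A2 m) (B2 m))"
    using \<open>\<M>2 \<in> LOCC_BA\<close> unfolding LOCC_BA_def by blast
  have fin: "finite L1" "finite L2"
    using inst1 inst2 by (auto simp: instrument_def)
  obtain m0 n0 where m0: "m0 \<in> L1" and n0: "n0 \<in> L2"
    using instrument_outcomes_nonempty[OF inst1] instrument_outcomes_nonempty[OF inst2] by blast
  define IA where "IA = insert 0 (Suc ` L2)"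
  define IB where "IB = insert 0 (Suc ` L1)"
  have finI: "finite IA" "finite IB" and zero: "0 \<in> IA" "0 \<in> IB"
    and Suc: "Suc ` L2 \<subseteq> IA" "Suc ` L1 \<subseteq> IB"
    using fin by (auto simp: IA_def IB_def)
  define A where "A oA iA = (case iA of 0 \<Rightarrow> A1 oA | Suc n \<Rightarrow> scale_map (if oA = m0 then 1 else 0) (A2 n))"
    for oA iA
  define B where "B oB iB = (case iB of 0 \<Rightarrow> B2 oB | Suc m \<Rightarrow> scale_map (if oB = n0 then 1 else 0) (B1 m))"
    for oB iB
  have instA: "\<forall>iA\<in>IA. instrument L1 (\<lambda>oA. A oA iA)"
    using inst1 chan2 fin(1) m0 by (auto simp: IA_def A_def intro: instrument_deterministic_outcome)
  have instB: "\<forall>iB\<in>IB. instrument L2 (\<lambda>oB. B oB iB)"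
    using inst2 chan1 fin(2) n0 by (auto simp: IB_def B_def intro: instrument_deterministic_outcome)
  have "(\<Sum>oA\<in>L1. \<Sum>oB\<in>L2. tensor_map (A oA 0) (B oB (Suc oA)) \<rho> k l) = \<M>1 \<rho> k l" for \<rho> k l
    using fin(2) n0 by (simp add: \<M>1_eq sum_maps_apply A_def B_def sum_maps_deterministic_outcome
        flip: tensor_map_sum_maps_right)
  moreover have "(\<Sum>oA\<in>L1. \<Sum>oB\<in>L2. tensor_map (A oA (Suc oB)) (B oB 0) \<rho> k l) = \<M>2 \<rho> k l" for \<rho> k l
    using fin(1) m0 by (subst sum.swap) (simp add: \<M>2_eq sum_maps_apply A_def B_def
        sum_maps_deterministic_outcome flip: tensor_map_sum_maps_left)
  ultimately have "\<M> = (\<lambda>\<rho> k l. \<Sum>iA\<in>IA. \<Sum>iB\<in>IB. \<Sum>oA\<in>L1. \<Sum>oB\<in>L2.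
      complex_of_real (mixture_process q iA iB oA oB) * tensor_map (A oA iA) (B oB iB) \<rho> k l)"
    unfolding sum_mixture_process[OF finI zero Suc] by (simp add: \<M>_eq)
  then show ?thesis
    unfolding LOCQP_def mem_Collect_eq
    using finI fin instA instB cond_prob_mixture_process[OF finI zero Suc q]
      normalised_on_strategies_mixture_process[OF finI zero Suc, of q, unfolded normalised_on_strategies_def]
    by (intro exI[of _ IA] exI[of _ IB] exI[of _ L1] exI[of _ L2] exI[of _ "mixture_process q"]
        exI[of _ A] exI[of _ B]) auto
qed

theorem mainTheorem17:
  fixes \<M> :: "('x::finite \<times> 'y::finite, 'a::finite \<times> 'b::finite) qmap"
  assumes "CPTP \<M>"
  shows "\<M> \<in> LOCQP \<longleftrightarrow>
    (\<exists>q::real. 0 \<le> q \<and> q \<le> 1 \<and>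
       (\<exists>\<M>1 \<in> LOCC_AB. \<exists>\<M>2 \<in> LOCC_BA.
          \<M> = (\<lambda>\<rho> k l. complex_of_real q * \<M>1 \<rho> k l + complex_of_real (1 - q) * \<M>2 \<rho> k l)))"
    (is "_ \<longleftrightarrow> ?mixture")
proof
  show "?mixture" if "\<M> \<in> LOCQP"
    using that by (rule LOCQP_imp_one_way_mixture)
  show "\<M> \<in> LOCQP" if ?mixture
    using that one_way_mixture_imp_LOCQP by blast
qed

end
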